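(* Let $M'=M[D,K]$ be a compatible minor of the weighted uncertainty matroid $\mathcal{M}$. If there is a basis $B$ of $M'$ and an element $e\in B$ that has the unique minimum weight in $E(M')\setminus\mathrm{span}_{M'}(B\setminus\{e\})$, then $M[D,K\cup\{e\}]$ is a compatible minor of $\mathcal{M}$.
   Context: A weighted uncertainty matroid $\mathcal{M}=(E,\mathcal{I},A,w)$ consists of a matroid $M=(E,\mathcal{I})$ on a finite set $E$, for each $e\in E$ a non-empty finite union $A_e$ of bounded real intervals (each open or closed), a weight $w_e\in A_e$, and a query cost $c_e\ge0$. A minimum-weight basis (MWB) is a basis minimizing total weight. A weight assignment is $w^*$ with $w^*_e\in A_e$, consistent with $Q$ if $w^*_e=w_e$ on $Q$. $Q$ verifies an MWB $B$ if for every weight assignment consistent with $Q$, $B$ is an MWB with respect to it; a certificate for $\mathcal{M}$ is a set verifying some MWB, and $c^*$ denotes the minimum cost $\sum_{e\in Q}c_e$ of a certificate for $\mathcal{M}$. For $D,K\subseteq E$, $M[D,K]$ is the matroid obtained from $M$ by deleting $D$ and contracting $K$, with ground set $E(M[D,K])=E\setminus(D\cup K)$ and weights restricted. $M[D,K]$ is a compatible minor of $\mathcal{M}$ if there is a set $Q$ of cost $c^*$ that verifies an MWB $B$ of $\mathcal{M}$ with $K\subseteq B$ and $D\cap B=\emptyset$. For a matroid $N$ with rank function $r$, $\mathrm{span}_N(X)=\{e: r(X\cup\{e\})=r(X)\}$. *)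

theory Defs
  imports Complex_Main
begin

definition matroid :: "'a set \<Rightarrow> 'a set set \<Rightarrow> bool" where
  "matroid E Ind \<longleftrightarrow>
     finite E \<and> Ind \<subseteq> Pow E \<and> {} \<in> Ind \<and>
     (\<forall>X Y. X \<in> Ind \<longrightarrow> Y \<subseteq> X \<longrightarrow> Y \<in> Ind) \<and>
     (\<forall>X Y. X \<in> Ind \<longrightarrow> Y \<in> Ind \<longrightarrow> card X < card Y \<longrightarrow>
        (\<exists>y \<in> Y - X. insert y X \<in> Ind))"

definition mrank :: "'a set set \<Rightarrow> 'a set \<Rightarrow> nat" where
  "mrank Ind S = Max (card ` {Y. Y \<subseteq> S \<and> Y \<in> Ind})"

definition is_basis :: "'a set set \<Rightarrow> 'a set \<Rightarrow> bool" where
  "is_basis Ind B \<longleftrightarrow> B \<in> Ind \<and> (\<forall>X \<in> Ind. B \<subseteq> X \<longrightarrow> X = B)"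

definition mspan :: "'a set set \<Rightarrow> 'a set \<Rightarrow> 'a set" where
  "mspan Ind X = {e. mrank Ind (X \<union> {e}) = mrank Ind X}"

definition mdelete :: "'a set \<times> 'a set set \<Rightarrow> 'a set \<Rightarrow> 'a set \<times> 'a set set" where
  "mdelete M D = (fst M - D, {X \<in> snd M. X \<inter> D = {}})"

definition mcontract :: "'a set \<times> 'a set set \<Rightarrow> 'a set \<Rightarrow> 'a set \<times> 'a set set" where
  "mcontract M K =
     (fst M - K,
      {X. X \<subseteq> fst M - K \<and>
          mrank (snd M) (X \<union> (K \<inter> fst M)) = card X + mrank (snd M) (K \<inter> fst M)})"

definition minor :: "'a set \<Rightarrow> 'a set set \<Rightarrow> 'a set \<Rightarrow> 'a set \<Rightarrow> 'a set \<times> 'a set set" where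
  "minor E Ind D K = mcontract (mdelete (E, Ind) D) K"

definition oc_interval :: "real set \<Rightarrow> bool" where
  "oc_interval I \<longleftrightarrow> (\<exists>a b. I = {a..b} \<or> I = {a<..<b})"

definition uncertainty_area :: "real set \<Rightarrow> bool" where
  "uncertainty_area S \<longleftrightarrow> S \<noteq> {} \<and>
     (\<exists>F. finite F \<and> (\<forall>I \<in> F. oc_interval I) \<and> S = \<Union>F)"

definition wum :: "'a set \<Rightarrow> 'a set set \<Rightarrow> ('a \<Rightarrow> real set) \<Rightarrow> ('a \<Rightarrow> real) \<Rightarrow> ('a \<Rightarrow> real) \<Rightarrow> bool" where
  "wum E Ind A w c \<longleftrightarrow> matroid E Ind \<and>
     (\<forall>e \<in> E. uncertainty_area (A e) \<and> w e \<in> A e \<and> c e \<ge> 0)"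

definition is_MWB :: "'a set set \<Rightarrow> ('a \<Rightarrow> real) \<Rightarrow> 'a set \<Rightarrow> bool" where
  "is_MWB Ind w B \<longleftrightarrow> is_basis Ind B \<and>
     (\<forall>B'. is_basis Ind B' \<longrightarrow> sum w B \<le> sum w B')"

definition weight_assignment :: "'a set \<Rightarrow> ('a \<Rightarrow> real set) \<Rightarrow> ('a \<Rightarrow> real) \<Rightarrow> bool" where
  "weight_assignment E A w' \<longleftrightarrow> (\<forall>e \<in> E. w' e \<in> A e)"

definition consistent :: "('a \<Rightarrow> real) \<Rightarrow> 'a set \<Rightarrow> ('a \<Rightarrow> real) \<Rightarrow> bool" where
  "consistent w Q w' \<longleftrightarrow> (\<forall>e \<in> Q. w' e = w e)"

definition verifies :: "'a set \<Rightarrow> 'a set set \<Rightarrow> ('a \<Rightarrow> real set) \<Rightarrow> ('a \<Rightarrow> real) \<Rightarrow> 'a set \<Rightarrow> 'a set \<Rightarrow> bool" where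
  "verifies E Ind A w Q B \<longleftrightarrow>
     (\<forall>w'. weight_assignment E A w' \<longrightarrow> consistent w Q w' \<longrightarrow> is_MWB Ind w' B)"

definition certificate :: "'a set \<Rightarrow> 'a set set \<Rightarrow> ('a \<Rightarrow> real set) \<Rightarrow> ('a \<Rightarrow> real) \<Rightarrow> 'a set \<Rightarrow> bool" where
  "certificate E Ind A w Q \<longleftrightarrow> Q \<subseteq> E \<and> (\<exists>B. is_MWB Ind w B \<and> verifies E Ind A w Q B)"

definition cstar :: "'a set \<Rightarrow> 'a set set \<Rightarrow> ('a \<Rightarrow> real set) \<Rightarrow> ('a \<Rightarrow> real) \<Rightarrow> ('a \<Rightarrow> real) \<Rightarrow> real" where
  "cstar E Ind A w c = Min (sum c ` {Q. certificate E Ind A w Q})"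

definition compatible_minor :: "'a set \<Rightarrow> 'a set set \<Rightarrow> ('a \<Rightarrow> real set) \<Rightarrow> ('a \<Rightarrow> real) \<Rightarrow> ('a \<Rightarrow> real) \<Rightarrow> 'a set \<Rightarrow> 'a set \<Rightarrow> bool" where
  "compatible_minor E Ind A w c D K \<longleftrightarrow> D \<subseteq> E \<and> K \<subseteq> E \<and>
     (\<exists>Q B. Q \<subseteq> E \<and> sum c Q = cstar E Ind A w c \<and> is_MWB Ind w B \<and>
            verifies E Ind A w Q B \<and> K \<subseteq> B \<and> D \<inter> B = {})"

end

theory Submission
  imports Defs
begin

(* Let B0 be the minimum-weight basis witnessing compatibility of M[D,K]; it suffices to show
   e \<in> B0, since then B0 and the same optimal certificate witness compatibility of M[D,K \<union> {e}].
   Otherwise B0 - K is a basis of the minor avoiding e, and a symmetric exchange between it and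
   B - {e} yields f \<in> B0 - K outside span(B - {e}) such that B0 - {f} + e is again a basis.
   The first property makes w e < w f, the second makes w f \<le> w e by minimality of B0. *)

lemma matroid_indep_subset_ground: "matroid E I \<Longrightarrow> X \<in> I \<Longrightarrow> X \<subseteq> E"
  unfolding matroid_def by blast

lemma matroid_indep_finite: "matroid E I \<Longrightarrow> X \<in> I \<Longrightarrow> finite X"
  unfolding matroid_def by (meson PowD finite_subset subsetD)

lemma matroid_indep_subset: "matroid E I \<Longrightarrow> X \<in> I \<Longrightarrow> Y \<subseteq> X \<Longrightarrow> Y \<in> I"
  unfolding matroid_def by blast

lemma matroid_augment:
  "matroid E I \<Longrightarrow> X \<in> I \<Longrightarrow> Y \<in> I \<Longrightarrow> card X < card Y \<Longrightarrow> \<exists>y \<in> Y - X. insert y X \<in> I"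
  unfolding matroid_def by blast

lemma matroid_augment_to_card:
  assumes m: "matroid E I" and "X \<in> I" "Z \<in> I" "card X \<le> card Z"
  shows "\<exists>X'. X \<subseteq> X' \<and> X' \<subseteq> X \<union> Z \<and> X' \<in> I \<and> card X' = card Z"
  using assms(2-)
proof (induction "card Z - card X" arbitrary: X)
  case 0
  then show ?case by auto
next
  case (Suc n X)
  then obtain y where y: "y \<in> Z - X" "insert y X \<in> I"
    using matroid_augment[OF m] by (metis diff_is_0_eq' le_neq_implies_less nat.distinct(1))
  have "card (insert y X) = Suc (card X)"
    using y matroid_indep_finite[OF m \<open>X \<in> I\<close>] by simp
  with Suc.hyps(2) Suc.prems(3) obtain X' where
    "insert y X \<subseteq> X'" "X' \<subseteq> insert y X \<union> Z" "X' \<in> I" "card X' = card Z"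
    using Suc.hyps(1)[OF _ y(2) Suc.prems(2)] by fastforce
  then show ?case using y by blast
qed

lemma is_basis_if_card_eq:
  assumes m: "matroid E I" and B: "is_basis I B" and X: "X \<in> I" "card X = card B"
  shows "is_basis I X"
  unfolding is_basis_def
proof (intro conjI ballI impI)
  show "X \<in> I" by fact
  fix Y assume Y: "Y \<in> I" "X \<subseteq> Y"
  show "Y = X"
  proof (rule ccontr)
    assume "Y \<noteq> X"
    with Y have "card B < card Y"
      using X matroid_indep_finite[OF m] psubset_card_mono by (metis psubsetI)
    then obtain y where "y \<in> Y - B" "insert y B \<in> I"
      using matroid_augment[OF m _ Y(1)] B unfolding is_basis_def by blast
    then show False using B unfolding is_basis_def by blast
  qed
qed

lemma mrank_eq_card_iff:
  assumes "finite S" "{} \<in> I"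
  shows "mrank I S = card S \<longleftrightarrow> S \<in> I"
proof -
  let ?C = "card ` {Y. Y \<subseteq> S \<and> Y \<in> I}"
  have fin: "finite ?C" using assms(1) by simp
  have ne: "?C \<noteq> {}" using assms(2) by auto
  have le: "\<forall>x\<in>?C. x \<le> card S" using card_mono assms(1) by auto
  show ?thesis
  proof
    assume "mrank I S = card S"
    then have "card S \<in> ?C" using Max_in[OF fin ne] unfolding mrank_def by simp
    then obtain Y where "Y \<subseteq> S" "Y \<in> I" "card Y = card S" by auto
    then show "S \<in> I" using card_subset_eq assms(1) by metis
  next
    assume "S \<in> I"
    then have "card S \<in> ?C" by auto
    then show "mrank I S = card S" unfolding mrank_def using Max_eqI[OF fin] le by blast
  qed
qed

lemma notin_mspan_if_insert_indep:
  assumes m: "matroid E I" and "insert f S \<in> I" "f \<notin> S"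
  shows "f \<notin> mspan I S"
proof -
  have emp: "{} \<in> I" using m unfolding matroid_def by blast
  have "S \<in> I" using matroid_indep_subset[OF m assms(2)] by blast
  have fin: "finite S" using matroid_indep_finite[OF m \<open>S \<in> I\<close>] .
  have "mrank I S = card S"
    using mrank_eq_card_iff[OF fin emp] \<open>S \<in> I\<close> by blast
  moreover have "mrank I (S \<union> {f}) = Suc (card S)"
    using mrank_eq_card_iff[of "insert f S" I] fin emp assms(2,3) by simp
  ultimately show ?thesis unfolding mspan_def by simp
qed

text \<open>In closure terms: if every element of Y lies in the span of S and e does not, then
  e does not lie in the span of Y.\<close>

lemma insert_indep_if_spanned_by:
  assumes m: "matroid E I" and eS: "insert e S \<in> I" "e \<notin> S" and Y: "Y \<in> I"
    and spanned: "\<forall>y \<in> Y. y \<in> S \<or> insert y S \<notin> I"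
  shows "insert e Y \<in> I"
proof -
  have S: "S \<in> I" using matroid_indep_subset[OF m eS(1)] by blast
  have small: "card Z \<le> card S" if "Z \<subseteq> S \<union> Y" "Z \<in> I" for Z
  proof (rule ccontr)
    assume "\<not> card Z \<le> card S"
    then obtain z where "z \<in> Z - S" "insert z S \<in> I" using matroid_augment[OF m S \<open>Z \<in> I\<close>] by auto
    then show False using that spanned by blast
  qed
  obtain Y' where Y': "Y \<subseteq> Y'" "Y' \<subseteq> Y \<union> S" "Y' \<in> I" "card Y' = card S"
    using matroid_augment_to_card[OF m Y S] small[of Y] Y by blast
  have "card Y' < card (insert e S)"
    using Y'(4) eS(2) matroid_indep_finite[OF m S] by simp
  then obtain x where x: "x \<in> insert e S - Y'" "insert x Y' \<in> I"
    using matroid_augment[OF m Y'(3) eS(1)] by blast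
  have "x = e"
  proof (rule ccontr)
    assume "x \<noteq> e"
    then have "insert x Y' \<subseteq> S \<union> Y" using x Y' by auto
    then have "card (insert x Y') \<le> card S" using small x(2) by blast
    then show False using x Y' matroid_indep_finite[OF m Y'(3)] by simp
  qed
  then show ?thesis using matroid_indep_subset[OF m x(2)] Y'(1) by blast
qed

lemma basis_exchange_if_insert_indep:
  assumes m: "matroid E I" and B: "is_basis I B" "e \<notin> B"
    and Y: "Y \<subseteq> B" "insert e Y \<in> I"
  shows "\<exists>f \<in> B - Y. insert e (B - {f}) \<in> I"
proof -
  have BI: "B \<in> I" and finB: "finite B"
    using B matroid_indep_finite[OF m] unfolding is_basis_def by auto
  have "Y \<noteq> B" using B Y unfolding is_basis_def by blast
  then have "card Y < card B" using Y finB psubset_card_mono by blast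
  moreover have "e \<notin> Y" using Y B by blast
  ultimately have "card (insert e Y) \<le> card B" using finite_subset[OF Y(1) finB] by simp
  then obtain J where J: "insert e Y \<subseteq> J" "J \<subseteq> insert e B" "J \<in> I" "card J = card B"
    using matroid_augment_to_card[OF m Y(2) BI] Y(1) by blast
  have J_eq: "J = insert e (B \<inter> J)" using J by blast
  then have "card J = Suc (card (B \<inter> J))" using B(2) finB
    by (metis IntE card_insert_disjoint finite_Int)
  moreover have "card B = card (B \<inter> J) + card (B - J)"
    using finB by (metis card_Int_Diff)
  ultimately have "card (B - J) = 1" using J(4) by simp
  then obtain f where f: "B - J = {f}" using card_1_singletonE by blast
  then have "insert e (B - {f}) = J" using J_eq by blast
  then show ?thesis using f J(1,3) by blast
qed

lemma indep_basis_symmetric_exchange: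
  assumes m: "matroid E I" and "S \<in> I" "insert e S \<in> I" "e \<notin> S"
    and B: "is_basis I B" "e \<notin> B"
  shows "\<exists>f \<in> B. f \<notin> S \<and> insert f S \<in> I \<and> insert e (B - {f}) \<in> I"
proof -
  define Y where "Y = {y \<in> B. y \<in> S \<or> insert y S \<notin> I}"
  have "Y \<subseteq> B" unfolding Y_def by blast
  then have "Y \<in> I"
    using B matroid_indep_subset[OF m] unfolding is_basis_def by blast
  moreover have "\<forall>y \<in> Y. y \<in> S \<or> insert y S \<notin> I" unfolding Y_def by blast
  ultimately have "insert e Y \<in> I"
    using insert_indep_if_spanned_by[OF m assms(3,4)] by blast
  then obtain f where "f \<in> B - Y" "insert e (B - {f}) \<in> I"
    using basis_exchange_if_insert_indep[OF m B \<open>Y \<subseteq> B\<close>] by blast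
  then show ?thesis unfolding Y_def by blast
qed

lemma is_MWB_exchange_weight_le:
  assumes m: "matroid E I" and B: "is_MWB I w B"
    and f: "f \<in> B" and e: "e \<notin> B" and indep: "insert e (B - {f}) \<in> I"
  shows "w f \<le> w e"
proof -
  have Bb: "is_basis I B" using B unfolding is_MWB_def by blast
  then have finB: "finite B"
    using matroid_indep_finite[OF m] unfolding is_basis_def by blast
  have "card (insert e (B - {f})) = card B"
    using f e finB card.remove[OF finB f] by simp
  then have "is_basis I (insert e (B - {f}))"
    using is_basis_if_card_eq[OF m Bb indep] by simp
  then have "sum w B \<le> sum w (insert e (B - {f}))"
    using B unfolding is_MWB_def by blast
  also have "\<dots> = w e + (sum w B - w f)"
    using f e finB by (simp add: sum_diff1)
  finally show ?thesis by simp
qed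

lemma fst_minor: "fst (minor E Ind D K) = E - D - K"
  unfolding minor_def mcontract_def mdelete_def by auto

lemma snd_minor:
  assumes m: "matroid E Ind" and "K \<in> Ind" "K \<inter> D = {}"
  shows "snd (minor E Ind D K) = {X. X \<subseteq> E - D - K \<and> X \<union> K \<in> Ind}"
proof -
  define Ind' where "Ind' = {X \<in> Ind. X \<inter> D = {}}"
  have emp': "{} \<in> Ind'" using m unfolding Ind'_def matroid_def by blast
  have KE: "K \<subseteq> E" using matroid_indep_subset_ground[OF m \<open>K \<in> Ind\<close>] .
  have finE: "finite E" using m unfolding matroid_def by blast
  have rK: "mrank Ind' K = card K"
    using mrank_eq_card_iff[OF finite_subset[OF KE finE] emp'] assms(2,3) unfolding Ind'_def by blast
  have "mrank Ind' (X \<union> K) = card X + mrank Ind' K \<longleftrightarrow> X \<union> K \<in> Ind"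
    if X: "X \<subseteq> E - D - K" for X
  proof -
    have fin: "finite (X \<union> K)" using X KE finE by (meson Diff_subset finite_subset le_supI subset_trans)
    have "card (X \<union> K) = card X + card K" using X fin by (subst card_Un_disjoint) auto
    then have "mrank Ind' (X \<union> K) = card X + mrank Ind' K \<longleftrightarrow> X \<union> K \<in> Ind'"
      using rK mrank_eq_card_iff[OF fin emp'] by simp
    also have "\<dots> \<longleftrightarrow> X \<union> K \<in> Ind" using X assms(3) unfolding Ind'_def by blast
    finally show ?thesis .
  qed
  moreover have "K \<inter> (E - D) = K" using KE assms(3) by blast
  ultimately show ?thesis
    unfolding minor_def mcontract_def mdelete_def by (auto simp flip: Ind'_def)
qed

lemma matroid_contract_indep:
  assumes m: "matroid E Ind" and K: "K \<in> Ind"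
  shows "matroid (E - D - K) {X. X \<subseteq> E - D - K \<and> X \<union> K \<in> Ind}"
  unfolding matroid_def
proof (intro conjI allI impI)
  let ?IM = "{X. X \<subseteq> E - D - K \<and> X \<union> K \<in> Ind}"
  show "finite (E - D - K)" using m unfolding matroid_def by simp
  show "?IM \<subseteq> Pow (E - D - K)" by blast
  show "{} \<in> ?IM" using K by simp
  fix X Y
  assume X: "X \<in> ?IM"
  { assume "Y \<subseteq> X"
    then have "Y \<union> K \<subseteq> X \<union> K" by blast
    then show "Y \<in> ?IM"
      using X \<open>Y \<subseteq> X\<close> matroid_indep_subset[OF m] by blast }
  assume Y: "Y \<in> ?IM" and less: "card X < card Y"
  have XK: "X \<union> K \<in> Ind" and YK: "Y \<union> K \<in> Ind" using X Y by auto
  have fin: "finite X" "finite Y" "finite K"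
    using matroid_indep_finite[OF m XK] matroid_indep_finite[OF m YK] by auto
  have "X \<inter> K = {}" "Y \<inter> K = {}" using X Y by auto
  then have "card (X \<union> K) < card (Y \<union> K)"
    using fin less by (simp add: card_Un_disjoint)
  then obtain y where "y \<in> (Y \<union> K) - (X \<union> K)" "insert y (X \<union> K) \<in> Ind"
    using matroid_augment[OF m XK YK] by blast
  then show "\<exists>y\<in>Y - X. insert y X \<in> ?IM"
    using X Y by auto
qed

lemma is_basis_contract_Diff:
  assumes m: "matroid E Ind" and B: "is_basis Ind B" "K \<subseteq> B" "B \<inter> D = {}"
  shows "is_basis {X. X \<subseteq> E - D - K \<and> X \<union> K \<in> Ind} (B - K)"
  unfolding is_basis_def
proof (intro conjI ballI impI)
  have BI: "B \<in> Ind" and max: "\<And>X. X \<in> Ind \<Longrightarrow> B \<subseteq> X \<Longrightarrow> X = B"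
    using B(1) unfolding is_basis_def by blast+
  have "B \<subseteq> E" using matroid_indep_subset_ground[OF m BI] .
  moreover have "B - K \<union> K = B" using B(2) by blast
  ultimately show "B - K \<in> {X. X \<subseteq> E - D - K \<and> X \<union> K \<in> Ind}"
    using BI B(3) by (simp add: Diff_mono disjoint_iff subset_iff)
  fix X assume X: "X \<in> {X. X \<subseteq> E - D - K \<and> X \<union> K \<in> Ind}" "B - K \<subseteq> X"
  have "B \<subseteq> X \<union> K" using X(2) by blast
  then have "X \<union> K = B" using max X(1) by simp
  then show "X = B - K" using X(1) by blast
qed

lemma is_MWB_contains_unique_min_outside_span:
  assumes m: "matroid E Ind" and B0: "is_MWB Ind w B0" "K \<subseteq> B0" "D \<inter> B0 = {}"
    and B: "is_basis (snd (minor E Ind D K)) B" "e \<in> B"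
    and min: "\<forall>f \<in> fst (minor E Ind D K) - mspan (snd (minor E Ind D K)) (B - {e}).
                f \<noteq> e \<longrightarrow> w e < w f"
  shows "e \<in> B0"
proof (rule ccontr)
  assume eB0: "e \<notin> B0"
  let ?IM = "{X. X \<subseteq> E - D - K \<and> X \<union> K \<in> Ind}"
  have B0b: "is_basis Ind B0" using B0(1) unfolding is_MWB_def by blast
  then have "B0 \<in> Ind" unfolding is_basis_def by blast
  then have K: "K \<in> Ind" and B0E: "B0 \<subseteq> E"
    using matroid_indep_subset[OF m _ B0(2)] matroid_indep_subset_ground[OF m] by blast+
  have IM: "snd (minor E Ind D K) = ?IM"
    using snd_minor[OF m K] B0(2,3) by blast
  have mIM: "matroid (E - D - K) ?IM" using matroid_contract_indep[OF m K] .
  have B1: "is_basis ?IM (B0 - K)"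
    using is_basis_contract_Diff[OF m B0b B0(2)] B0(3) by (simp add: Int_commute)
  have "B \<in> ?IM" using B(1) IM unfolding is_basis_def by simp
  then have S: "B - {e} \<in> ?IM" and eS: "insert e (B - {e}) \<in> ?IM"
    using matroid_indep_subset[OF mIM _ Diff_subset] B(2) by (simp_all add: insert_absorb)
  have "e \<notin> B0 - K" using eB0 by blast
  then obtain f where f: "f \<in> B0 - K" "f \<notin> B - {e}"
      "insert f (B - {e}) \<in> ?IM" "insert e (B0 - K - {f}) \<in> ?IM"
    using indep_basis_symmetric_exchange[OF mIM S eS _ B1] by blast
  have "f \<notin> mspan ?IM (B - {e})" using notin_mspan_if_insert_indep[OF mIM f(3,2)] .
  moreover have "f \<in> E - D - K" using f(1) B0E B0(3) by blast
  moreover have "f \<noteq> e" using f(1) eB0 by blast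
  ultimately have "w e < w f" using min unfolding IM fst_minor by blast
  moreover have "insert e (B0 - {f}) = insert e (B0 - K - {f}) \<union> K" using f(1) B0(2) by blast
  then have "insert e (B0 - {f}) \<in> Ind" using f(4) by simp
  then have "w f \<le> w e" using is_MWB_exchange_weight_le[OF m B0(1) _ eB0] f(1) by blast
  ultimately show False by simp
qed

theorem mainTheorem10:
  fixes E :: "'a set" and Ind :: "'a set set" and A :: "'a \<Rightarrow> real set"
    and w c :: "'a \<Rightarrow> real" and D K B :: "'a set" and e :: 'a
  assumes "wum E Ind A w c"
    and "compatible_minor E Ind A w c D K"
    and "is_basis (snd (minor E Ind D K)) B"
    and "e \<in> B"
    and "e \<in> fst (minor E Ind D K) - mspan (snd (minor E Ind D K)) (B - {e})"
    and "\<forall>f \<in> fst (minor E Ind D K) - mspan (snd (minor E Ind D K)) (B - {e}).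
           f \<noteq> e \<longrightarrow> w e < w f"
  shows "compatible_minor E Ind A w c D (K \<union> {e})"
proof -
  have m: "matroid E Ind" using assms(1) unfolding wum_def by blast
  obtain Q B0 where "D \<subseteq> E" "K \<subseteq> E" "Q \<subseteq> E" "sum c Q = cstar E Ind A w c"
      "is_MWB Ind w B0" "verifies E Ind A w Q B0" "K \<subseteq> B0" "D \<inter> B0 = {}"
    using assms(2) unfolding compatible_minor_def by blast
  moreover have "e \<in> B0"
    using is_MWB_contains_unique_min_outside_span[OF m] calculation assms(3,4,6) by blast
  moreover have "e \<in> E" using assms(5) fst_minor by fastforce
  ultimately show ?thesis unfolding compatible_minor_def by blast
qed

end
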